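(* Let $f_1,\dots,f_{n_f}:\mathbb{R}^{n_x}\times\mathbb{R}^{n_u}\to\mathbb{R}^{n_x}$ and $g_1,\dots,g_{n_f}:\mathbb{R}^{n_x}\to\mathbb{R}$ be smooth, let $F(x,u)=[f_1(x,u),\dots,f_{n_f}(x,u)]$ and $g(x)=(g_1(x),\dots,g_{n_f}(x))$. Let $x:[0,T]\to\mathbb{R}^{n_x}$ be a continuous function and $\theta,\lambda:[0,T]\to\mathbb{R}^{n_f}$, $\mu:[0,T]\to\mathbb{R}$ functions such that $x,\theta,\lambda,\mu$ form a solution of the dynamic complementarity system $$\dot x=F(x,u)\theta,\quad 0=g(x)-\lambda-\mu e,\quad 1=e^\top\theta,\quad 0\le\theta\perp\lambda\ge 0,$$ where the algebraic conditions hold for every $t\in[0,T]$. Then the functions $\lambda(t)$ and $\mu(t)$ are continuous in time.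
   Context: $e$ denotes the vector of all ones; $0\le a\perp b\ge 0$ means $a\ge 0$, $b\ge 0$ componentwise and $a^\top b=0$. *)

theory Defs
  imports "HOL-Analysis.Analysis"
begin

text \<open>Smoothness (C-infinity) on the whole space: there is a family D of iterated
  Frechet derivatives, D vs y being the iterated derivative at y applied to the
  directions in vs, with D [] = f, each D vs continuous, and the Frechet derivative
  of D vs at y being h maps to D (h # vs) y.\<close>
definition smooth :: "('a::euclidean_space \<Rightarrow> 'b::real_normed_vector) \<Rightarrow> bool" where
  "smooth f \<longleftrightarrow> (\<exists>D :: 'a list \<Rightarrow> 'a \<Rightarrow> 'b.
      D [] = f \<and>
      (\<forall>vs. continuous_on UNIV (D vs)) \<and>
      (\<forall>vs y. (D vs has_derivative (\<lambda>h. D (h # vs) y)) (at y)))"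

text \<open>The matrix-vector product F(x,u) theta, where the columns of F are f_1..f_nf.\<close>
definition Fmul :: "('f::finite \<Rightarrow> (real^'nx) \<times> (real^'nu) \<Rightarrow> real^'nx) \<Rightarrow> real^'nx \<Rightarrow> real^'nu \<Rightarrow> real^'f \<Rightarrow> real^'nx" where
  "Fmul f x u th = (\<Sum>i\<in>UNIV. (th $ i) *\<^sub>R f i (x, u))"

end

theory Submission
  imports Defs
begin

(* At each time t the algebraic conditions pin down the multiplier: theta(t) is a
   probability vector, so some theta_j(t) > 0; complementarity forces lam_j(t) = 0 and
   hence mu(t) = g_j(x(t)), while lam(t) >= 0 gives mu(t) <= g_i(x(t)) for every i.
   Thus mu(t) = min_i g_i(x(t)), a minimum of finitely many continuous functions of t,
   and lam(t) = g(x(t)) - mu(t) e is continuous too. Only the continuity of x and of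
   the g_i enters. *)

lemma smooth_imp_continuous_on: "smooth f \<Longrightarrow> continuous_on S f"
  unfolding smooth_def by (metis continuous_on_subset subset_UNIV)

lemma continuous_on_Min:
  fixes h :: "'i \<Rightarrow> 'a::topological_space \<Rightarrow> 'b::linorder_topology"
  assumes "finite A" "A \<noteq> {}" "\<And>i. i \<in> A \<Longrightarrow> continuous_on S (h i)"
  shows "continuous_on S (\<lambda>t. Min ((\<lambda>i. h i t) ` A))"
  using assms
proof (induction A rule: finite_ne_induct)
  case (singleton i)
  then show ?case by simp
next
  case (insert i A)
  have "continuous_on S (\<lambda>t. min (h i t) (Min ((\<lambda>i. h i t) ` A)))"
    using insert by (intro continuous_on_min) auto
  with insert show ?case by simp
qed

lemma complementarity_multiplier_eq_Min:
  fixes \<theta> lam c :: "real^'n" and \<mu> :: real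
  assumes "\<And>i. c $ i - lam $ i - \<mu> = 0"
    and "(\<Sum>i\<in>UNIV. \<theta> $ i) = 1"
    and "\<And>i. \<theta> $ i \<ge> 0" "\<And>i. lam $ i \<ge> 0"
    and "\<theta> \<bullet> lam = 0"
  shows "\<mu> = Min (range (\<lambda>i. c $ i))"
proof -
  obtain j where "\<theta> $ j > 0"
    using assms(2,3) by (metis less_eq_real_def sum.neutral zero_neq_one)
  moreover have "\<theta> $ j * lam $ j = 0"
    using assms(3-5) by (simp add: inner_vec_def sum_nonneg_eq_0_iff)
  ultimately have "lam $ j = 0" by simp
  then have "\<mu> = c $ j" using assms(1)[of j] by simp
  moreover have "\<mu> \<le> c $ i" for i using assms(1)[of i] assms(4)[of i] by simp
  ultimately show ?thesis
    by (intro antisym Min.boundedI Min.coboundedI[of _ "c $ j", THEN order_trans]) auto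
qed

theorem lemma1:
  fixes f :: "'f::finite \<Rightarrow> (real^'nx) \<times> (real^'nu) \<Rightarrow> real^'nx"
    and g :: "'f \<Rightarrow> real^'nx \<Rightarrow> real"
    and T :: real
    and x :: "real \<Rightarrow> real^'nx"
    and u :: "real \<Rightarrow> real^'nu"
    and \<theta> lam :: "real \<Rightarrow> real^'f"
    and \<mu> :: "real \<Rightarrow> real"
  assumes f_smooth: "\<forall>i. smooth (f i)"
    and g_smooth: "\<forall>i. smooth (g i)"
    and x_cont: "continuous_on {0..T} x"
    and ode: "\<exists>N. N \<in> null_sets lborel \<and>
       (\<forall>t\<in>{0..T} - N. (x has_vector_derivative Fmul f (x t) (u t) (\<theta> t)) (at t within {0..T}))"
    and alg: "\<forall>t\<in>{0..T}. \<forall>i. g i (x t) - lam t $ i - \<mu> t = 0"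
    and sum1: "\<forall>t\<in>{0..T}. (\<Sum>i\<in>UNIV. \<theta> t $ i) = 1"
    and th_nn: "\<forall>t\<in>{0..T}. \<forall>i. \<theta> t $ i \<ge> 0"
    and la_nn: "\<forall>t\<in>{0..T}. \<forall>i. lam t $ i \<ge> 0"
    and compl: "\<forall>t\<in>{0..T}. \<theta> t \<bullet> lam t = 0"
  shows "continuous_on {0..T} lam \<and> continuous_on {0..T} \<mu>"
proof -
  have gx_cont: "continuous_on {0..T} (\<lambda>t. g i (x t))" for i
    using g_smooth x_cont by (metis continuous_on_compose2 smooth_imp_continuous_on subset_UNIV)
  have \<mu>_eq_Min: "\<mu> t = Min (range (\<lambda>i. g i (x t)))" if "t \<in> {0..T}" for t
  proof -
    have "\<mu> t = Min (range (\<lambda>i. (\<chi> i. g i (x t)) $ i))"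
      by (rule complementarity_multiplier_eq_Min[where \<theta> = "\<theta> t" and lam = "lam t"])
        (use that alg sum1 th_nn la_nn compl in auto)
    then show ?thesis by simp
  qed
  have "continuous_on {0..T} (\<lambda>t. Min (range (\<lambda>i. g i (x t))))"
    by (intro continuous_on_Min gx_cont) auto
  then have \<mu>_cont: "continuous_on {0..T} \<mu>"
    by (rule continuous_on_eq) (simp add: \<mu>_eq_Min)
  have "continuous_on {0..T} (\<lambda>t. \<chi> i. g i (x t) - \<mu> t)"
    by (intro continuous_on_vec_lambda continuous_on_diff gx_cont \<mu>_cont)
  then have "continuous_on {0..T} lam"
    by (rule continuous_on_eq) (use alg in \<open>auto simp: vec_eq_iff algebra_simps\<close>)
  with \<mu>_cont show ?thesis by blast
qed

end
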